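(* Let $A$ be a T-brace and let $a\in\zeta_2(\star,A)$. If $a$ has finite order in $(A,+)$ and the additive group of $\zeta_2(\star,A)$ is not periodic, then $x\star a\in\langle a\star a\rangle$ and $a\star x\in\langle a\star a\rangle$ for all $x\in A$, where $\langle a\star a\rangle$ denotes the cyclic subgroup of $(A,+)$ generated by $a\star a$.
   Context: A (left) brace is a set $A$ with two operations $+$ and $\cdot$ such that $(A,+)$ is an abelian group, $(A,\cdot)$ is a group, and $a(b+c)=ab+ac-a$ for all $a,b,c\in A$. Put $a\star b=ab-a-b$. A subbrace is a subset which is a subgroup of both $(A,+)$ and $(A,\cdot)$; a subbrace $L$ is an ideal if $a\star z, z\star a\in L$ for all $a\in A$, $z\in L$, and then the quotient brace $A/L$ is defined. $A$ is a T-brace if whenever $I$ is an ideal of $J$ and $J$ is an ideal of $A$, then $I$ is an ideal of $A$. The $\star$-center is $\zeta(\star,A)=\{a: a\star x=x\star a=0\ \forall x\}$; $\zeta_2(\star,A)$ is given by $\zeta_2(\star,A)/\zeta(\star,A)=\zeta(\star,A/\zeta(\star,A))$. *)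

theory Defs
  imports "HOL-Algebra.Algebra"
begin

text \<open>A (left) brace is given by an additive structure P (an abelian group) and
a multiplicative structure M (a group) on the same carrier, related by the
left brace law a(b+c) = ab + ac - a.\<close>

definition brace :: "'a monoid \<Rightarrow> 'a monoid \<Rightarrow> bool" where
  "brace P M \<longleftrightarrow> comm_group P \<and> group M \<and> carrier P = carrier M \<and>
     (\<forall>a\<in>carrier P. \<forall>b\<in>carrier P. \<forall>c\<in>carrier P.
        a \<otimes>\<^bsub>M\<^esub> (b \<otimes>\<^bsub>P\<^esub> c)
          = ((a \<otimes>\<^bsub>M\<^esub> b) \<otimes>\<^bsub>P\<^esub> (a \<otimes>\<^bsub>M\<^esub> c)) \<otimes>\<^bsub>P\<^esub> inv\<^bsub>P\<^esub> a)"

definition bstar :: "'a monoid \<Rightarrow> 'a monoid \<Rightarrow> 'a \<Rightarrow> 'a \<Rightarrow> 'a" where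
  "bstar P M a b = ((a \<otimes>\<^bsub>M\<^esub> b) \<otimes>\<^bsub>P\<^esub> inv\<^bsub>P\<^esub> a) \<otimes>\<^bsub>P\<^esub> inv\<^bsub>P\<^esub> b"

definition subbrace :: "'a monoid \<Rightarrow> 'a monoid \<Rightarrow> 'a set \<Rightarrow> bool" where
  "subbrace P M S \<longleftrightarrow> subgroup S P \<and> subgroup S M"

text \<open>I is an ideal of the subbrace J (J regarded as a brace in its own right).\<close>
definition ideal_of :: "'a monoid \<Rightarrow> 'a monoid \<Rightarrow> 'a set \<Rightarrow> 'a set \<Rightarrow> bool" where
  "ideal_of P M I J \<longleftrightarrow> subbrace P M J \<and> subbrace P M I \<and> I \<subseteq> J \<and>
     (\<forall>a\<in>J. \<forall>z\<in>I. bstar P M a z \<in> I \<and> bstar P M z a \<in> I)"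

definition brace_ideal :: "'a monoid \<Rightarrow> 'a monoid \<Rightarrow> 'a set \<Rightarrow> bool" where
  "brace_ideal P M I \<longleftrightarrow> ideal_of P M I (carrier P)"

definition T_brace :: "'a monoid \<Rightarrow> 'a monoid \<Rightarrow> bool" where
  "T_brace P M \<longleftrightarrow> brace P M \<and>
     (\<forall>I J. ideal_of P M I J \<and> brace_ideal P M J \<longrightarrow> brace_ideal P M I)"

definition star_center :: "'a monoid \<Rightarrow> 'a monoid \<Rightarrow> 'a set" where
  "star_center P M = {a \<in> carrier P. \<forall>x\<in>carrier P.
      bstar P M a x = \<one>\<^bsub>P\<^esub> \<and> bstar P M x a = \<one>\<^bsub>P\<^esub>}"

text \<open>zeta_2: a + zeta lies in the star-center of A/zeta.  In the quotient brace,
(a+L) star (x+L) = (a star x) + L and the zero is L, so this unfolds to:\<close>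
definition star_center2 :: "'a monoid \<Rightarrow> 'a monoid \<Rightarrow> 'a set" where
  "star_center2 P M = {a \<in> carrier P. \<forall>x\<in>carrier P.
      bstar P M a x \<in> star_center P M \<and> bstar P M x a \<in> star_center P M}"

end

theory Submission
  imports Defs
begin

text \<open>For \<open>b \<in> \<zeta>\<^sub>2\<close> the set \<open>\<langle>b\<rangle> + \<zeta>\<close> is an ideal of \<open>A\<close> on which \<open>u \<star> v\<close> always lies
  in \<open>\<langle>b \<star> b\<rangle>\<close>; hence \<open>\<langle>b\<rangle> + \<langle>b \<star> b\<rangle>\<close> is an ideal of it, in a T-brace an ideal of \<open>A\<close>,
  and so \<open>x \<star> b, b \<star> x \<in> \<langle>b\<rangle> + \<langle>b \<star> b\<rangle>\<close>.  Apply this to \<open>b = a + c\<close>, where \<open>c \<in> \<zeta>\<^sub>2\<close> has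
  infinite order and \<open>c \<star> y = y \<star> c = 0\<close> for \<open>y = x, a, c\<close> (if \<open>\<zeta>\<close> is periodic, a suitable
  multiple of a non-periodic element of \<open>\<zeta>\<^sub>2\<close>).  Then the stars of \<open>b\<close> are those of \<open>a\<close>,
  and since \<open>x \<star> a\<close>, \<open>a \<star> x\<close>, \<open>a \<star> a\<close> have finite order while \<open>c\<close> does not, the
  \<open>\<langle>a + c\<rangle>\<close>-component of \<open>x \<star> a\<close> and \<open>a \<star> x\<close> must vanish.\<close>

lemma (in group) ord_pow_eq_0:
  assumes "x \<in> carrier G" "ord x = 0" "(n::nat) \<noteq> 0"
  shows "ord (x [^] n) = 0"
proof -
  have "(x [^] n) [^] m \<noteq> \<one>" if "m \<noteq> 0" for m :: nat
    using assms that by (simp add: nat_pow_pow pow_eq_id)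
  then show ?thesis
    using assms(1) by (simp add: ord_eq_0)
qed

lemma (in group) mem_generate_set_mult_iff:
  assumes "x \<in> carrier G"
  shows "u \<in> generate G {x} <#> K \<longleftrightarrow> (\<exists>k::int. \<exists>w\<in>K. u = x [^] k \<otimes> w)"
  using assms by (auto simp: set_mult_def generate_pow)

lemma (in comm_group) torsion_mem_generate_set_mult:
  assumes a: "a \<in> carrier G" and c: "c \<in> carrier G" and s: "s \<in> carrier G"
    and ord_a: "ord a \<noteq> 0" and ord_s: "ord s \<noteq> 0" and ord_c: "ord c = 0" and ord_y: "ord y \<noteq> 0"
    and y: "y \<in> generate G {a \<otimes> c} <#> generate G {s}"
  shows "y \<in> generate G {s}"
proof -
  obtain k l :: int where y_eq: "y = (a \<otimes> c) [^] k \<otimes> s [^] l"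
    using y by (auto simp: mem_generate_set_mult_iff[OF m_closed[OF a c]] generate_pow[OF s])
  have yc: "y \<in> carrier G"
    using y_eq a c s by simp
  define n where "n = int (ord a) * int (ord s) * int (ord y)"
  have "int (ord a) dvd n" "int (ord s) dvd n" "int (ord y) dvd n"
    unfolding n_def by (simp_all add: dvd_mult dvd_mult2)
  then have pow_a: "a [^] (k * n) = \<one>" and pow_s: "s [^] (l * n) = \<one>"
    and pow_y: "y [^] n = \<one>"
    using a s yc by (simp_all add: int_pow_eq_id dvd_mult)
  have "c [^] (k * n) = a [^] (k * n) \<otimes> c [^] (k * n) \<otimes> s [^] (l * n)"
    using pow_a pow_s c by simp
  also have "\<dots> = y [^] n"
    using y_eq a c s by (simp add: int_pow_distrib int_pow_pow)
  finally have "c [^] (k * n) = \<one>"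
    using pow_y by simp
  then have "k * n = 0"
    using c ord_c by (simp add: int_pow_eq_id)
  then have "k = 0"
    using ord_a ord_s ord_y by (simp add: n_def)
  then show ?thesis
    using y_eq s by (auto simp: generate_pow)
qed

lemma (in monoid) set_mult_supset_left: "\<lbrakk>\<one> \<in> K; H \<subseteq> carrier G\<rbrakk> \<Longrightarrow> H \<subseteq> H <#> K"
  unfolding set_mult_def by force

lemma (in monoid) set_mult_supset_right: "\<lbrakk>\<one> \<in> H; K \<subseteq> carrier G\<rbrakk> \<Longrightarrow> K \<subseteq> H <#> K"
  unfolding set_mult_def by force

locale left_brace = P: comm_group P + M: group M for P :: "'a monoid" (structure) and M :: "'a monoid" +
  assumes carrier_M: "carrier M = carrier P"
    and brace_law: "\<And>a b c. \<lbrakk>a \<in> carrier P; b \<in> carrier P; c \<in> carrier P\<rbrakk> \<Longrightarrow>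
      a \<otimes>\<^bsub>M\<^esub> (b \<otimes> c)
        = ((a \<otimes>\<^bsub>M\<^esub> b) \<otimes> (a \<otimes>\<^bsub>M\<^esub> c)) \<otimes> inv a"

lemma left_braceI: "brace P M \<Longrightarrow> left_brace P M"
  unfolding brace_def left_brace_def left_brace_axioms_def by auto

context left_brace
begin

abbreviation star :: "'a \<Rightarrow> 'a \<Rightarrow> 'a" (infixl "\<star>" 72)
  where "x \<star> y \<equiv> bstar P M x y"

abbreviation zeta :: "'a set" where "zeta \<equiv> star_center P M"
abbreviation zeta2 :: "'a set" where "zeta2 \<equiv> star_center2 P M"

lemma P_cancel_left: "\<lbrakk>x \<in> carrier P; z \<in> carrier P\<rbrakk> \<Longrightarrow> x \<otimes> (inv x \<otimes> z) = z"
  and P_cancel_left': "\<lbrakk>x \<in> carrier P; z \<in> carrier P\<rbrakk> \<Longrightarrow> inv x \<otimes> (x \<otimes> z) = z"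
  by (simp_all flip: P.m_assoc)

lemmas P_ac_simps = P.m_ac P.inv_mult P_cancel_left P_cancel_left'

lemma M_closed [simp]: "\<lbrakk>x \<in> carrier P; y \<in> carrier P\<rbrakk> \<Longrightarrow> x \<otimes>\<^bsub>M\<^esub> y \<in> carrier P"
  using carrier_M M.m_closed by auto

lemma star_closed [simp]: "\<lbrakk>x \<in> carrier P; y \<in> carrier P\<rbrakk> \<Longrightarrow> x \<star> y \<in> carrier P"
  unfolding bstar_def by simp

lemma M_mult_eq: "\<lbrakk>x \<in> carrier P; y \<in> carrier P\<rbrakk> \<Longrightarrow>
    x \<otimes>\<^bsub>M\<^esub> y = (x \<otimes> y) \<otimes> (x \<star> y)"
  unfolding bstar_def by (simp add: P_ac_simps)

lemma M_one_eq: "\<one>\<^bsub>M\<^esub> = \<one>"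
proof -
  have one: "\<one>\<^bsub>M\<^esub> \<in> carrier P" using carrier_M by auto
  have "\<one>\<^bsub>M\<^esub> \<otimes>\<^bsub>M\<^esub> \<one> = \<one>" using carrier_M by simp
  with brace_law[OF one P.one_closed P.one_closed] have "\<one> = inv \<one>\<^bsub>M\<^esub>"
    using one by simp
  then show ?thesis using one by (metis P.inv_inv P.inv_one)
qed

lemma star_one_left [simp]: "x \<in> carrier P \<Longrightarrow> \<one> \<star> x = \<one>"
  using M.l_one[of x] unfolding bstar_def M_one_eq carrier_M by (simp add: P_ac_simps)

lemma star_right_hom: "x \<in> carrier P \<Longrightarrow> (\<lambda>y. x \<star> y) \<in> hom P P"
  by (rule homI) (simp_all add: bstar_def brace_law P_ac_simps)

lemma star_one_right [simp]: "x \<in> carrier P \<Longrightarrow> x \<star> \<one> = \<one>"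
  using hom_one[OF star_right_hom] P.is_group by blast

lemma star_add_right: "\<lbrakk>x \<in> carrier P; y \<in> carrier P; z \<in> carrier P\<rbrakk> \<Longrightarrow>
    x \<star> (y \<otimes> z) = (x \<star> y) \<otimes> (x \<star> z)"
  using star_right_hom by (simp add: hom_mult)

lemma star_inv_right: "\<lbrakk>x \<in> carrier P; y \<in> carrier P\<rbrakk> \<Longrightarrow> x \<star> inv y = inv (x \<star> y)"
  by (simp add: group_hom.hom_inv group_hom_axioms.intro group_hom_def star_right_hom)

lemma star_nat_pow_right: "\<lbrakk>x \<in> carrier P; y \<in> carrier P\<rbrakk> \<Longrightarrow>
    x \<star> (y [^] (n::nat)) = (x \<star> y) [^] n"
  by (simp add: hom_nat_pow star_right_hom)

lemma star_int_pow_right: "\<lbrakk>x \<in> carrier P; y \<in> carrier P\<rbrakk> \<Longrightarrow>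
    x \<star> (y [^] (k::int)) = (x \<star> y) [^] k"
  by (simp add: hom_int_pow star_right_hom)

lemma star_mult_left:
  assumes a: "a \<in> carrier P" and b: "b \<in> carrier P" and c: "c \<in> carrier P"
  shows "(a \<otimes>\<^bsub>M\<^esub> b) \<star> c = (a \<star> (b \<star> c) \<otimes> b \<star> c) \<otimes> a \<star> c"
proof -
  define ab where "ab = a \<otimes>\<^bsub>M\<^esub> b"
  have ab: "ab \<in> carrier P" "ab = (a \<otimes> b) \<otimes> a \<star> b"
    unfolding ab_def using a b by (simp_all add: M_mult_eq)
  let ?u = "((a \<otimes> b) \<otimes> a \<star> b) \<otimes> c"
  have "ab \<star> c \<otimes> ?u = ab \<otimes>\<^bsub>M\<^esub> c"
    using M_mult_eq[OF ab(1) c] ab a b c by (simp add: P.m_comm)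
  also have "\<dots> = a \<otimes>\<^bsub>M\<^esub> (b \<otimes>\<^bsub>M\<^esub> c)"
    unfolding ab_def using a b c carrier_M by (simp add: M.m_assoc)
  also have "\<dots> = ((a \<star> (b \<star> c) \<otimes> b \<star> c) \<otimes> a \<star> c) \<otimes> ?u"
    using a b c by (simp add: M_mult_eq star_add_right P_ac_simps)
  finally have "ab \<star> c = (a \<star> (b \<star> c) \<otimes> b \<star> c) \<otimes> a \<star> c"
    using ab a b c by simp
  then show ?thesis unfolding ab_def .
qed

lemma star_centerD:
  "w \<in> zeta \<Longrightarrow> w \<in> carrier P"
  "\<lbrakk>w \<in> zeta; x \<in> carrier P\<rbrakk> \<Longrightarrow> w \<star> x = \<one>"
  "\<lbrakk>w \<in> zeta; x \<in> carrier P\<rbrakk> \<Longrightarrow> x \<star> w = \<one>"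
  unfolding star_center_def by auto

lemma star_center2D:
  "y \<in> zeta2 \<Longrightarrow> y \<in> carrier P"
  "\<lbrakk>y \<in> zeta2; x \<in> carrier P\<rbrakk> \<Longrightarrow> y \<star> x \<in> zeta"
  "\<lbrakk>y \<in> zeta2; x \<in> carrier P\<rbrakk> \<Longrightarrow> x \<star> y \<in> zeta"
  unfolding star_center2_def by auto

lemma one_mem_star_center: "\<one> \<in> zeta"
  unfolding star_center_def by auto

lemma star_center_subset_center2: "zeta \<subseteq> zeta2"
  unfolding star_center2_def using star_centerD one_mem_star_center by auto

lemma star_add_center_left:
  assumes w: "w \<in> zeta" and y: "y \<in> carrier P" and c: "c \<in> carrier P"
  shows "(y \<otimes> w) \<star> c = y \<star> c"
proof -
  have wc: "w \<in> carrier P" using star_centerD w by auto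
  have "y \<otimes> w = y \<otimes>\<^bsub>M\<^esub> w"
    using M_mult_eq[OF y wc] star_centerD(3)[OF w y] y wc by simp
  then show ?thesis
    using star_mult_left[OF y wc c] star_centerD[OF w] y c by simp
qed

lemma subgroup_star_center: "subgroup zeta P"
proof (rule P.subgroupI)
  show "zeta \<subseteq> carrier P" "zeta \<noteq> {}"
    using star_centerD one_mem_star_center by auto
next
  fix w assume w: "w \<in> zeta"
  have wc: "w \<in> carrier P" using star_centerD w by auto
  have "inv w \<star> x = \<one>" if x: "x \<in> carrier P" for x
    using star_add_center_left[OF w P.inv_closed[OF wc] x] wc x by simp
  moreover have "x \<star> inv w = \<one>" if x: "x \<in> carrier P" for x
    using star_inv_right[OF x wc] star_centerD(3)[OF w x] by simp
  ultimately show "inv w \<in> zeta"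
    using wc unfolding star_center_def by auto
next
  fix v w assume v: "v \<in> zeta" and w: "w \<in> zeta"
  have vc: "v \<in> carrier P" and wc: "w \<in> carrier P" using star_centerD v w by auto
  have "(v \<otimes> w) \<star> x = \<one>" if x: "x \<in> carrier P" for x
    using star_add_center_left[OF w vc x] star_centerD(2)[OF v x] by simp
  moreover have "x \<star> (v \<otimes> w) = \<one>" if x: "x \<in> carrier P" for x
    using star_add_right[OF x vc wc] star_centerD(3)[OF v x] star_centerD(3)[OF w x] by simp
  ultimately show "v \<otimes> w \<in> zeta"
    using vc wc unfolding star_center_def by auto
qed

text \<open>Since \<open>x + y = xy - (x \<star> y)\<close>, a central \<open>x \<star> y\<close> can be dropped before applying
  \<open>star_mult_left\<close>.\<close>
lemma star_add_left:
  assumes x: "x \<in> carrier P" and y: "y \<in> carrier P" and c: "c \<in> carrier P"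
    and xy: "x \<star> y \<in> zeta"
  shows "(x \<otimes> y) \<star> c = (x \<star> (y \<star> c) \<otimes> y \<star> c) \<otimes> x \<star> c"
proof -
  have "x \<otimes> y = (x \<otimes>\<^bsub>M\<^esub> y) \<otimes> inv (x \<star> y)"
    using M_mult_eq[OF x y] x y by (simp add: P.m_assoc)
  then show ?thesis
    using star_add_center_left[OF subgroup.m_inv_closed[OF subgroup_star_center xy] _ c]
      star_mult_left[OF x y c] x y by simp
qed

lemma star_add_left_center2:
  assumes x: "x \<in> zeta2" and y: "y \<in> zeta2" and c: "c \<in> carrier P"
  shows "(x \<otimes> y) \<star> c = x \<star> c \<otimes> y \<star> c"
proof -
  have xc: "x \<in> carrier P" and yc: "y \<in> carrier P" using star_center2D x y by auto
  have "(x \<otimes> y) \<star> c = (x \<star> (y \<star> c) \<otimes> y \<star> c) \<otimes> x \<star> c"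
    using star_add_left[OF xc yc c star_center2D(2)[OF x yc]] .
  also have "\<dots> = x \<star> c \<otimes> y \<star> c"
    using star_centerD(3)[OF star_center2D(2)[OF y c] xc] xc yc c by (simp add: P.m_comm)
  finally show ?thesis .
qed

lemma star_inv_left_center2_mem:
  assumes x: "x \<in> zeta2" and c: "c \<in> carrier P"
  shows "inv x \<star> c \<in> zeta"
proof -
  have xc: "x \<in> carrier P" using star_center2D x by auto
  define q where "q = inv x \<star> c"
  have qc: "q \<in> carrier P" using q_def xc c by simp
  have "x \<star> inv x \<in> zeta"
    using star_inv_right[OF xc xc] star_center2D(2)[OF x xc]
      subgroup.m_inv_closed[OF subgroup_star_center] by simp
  then have "\<one> = (x \<star> q \<otimes> q) \<otimes> x \<star> c"
    using star_add_left[OF xc P.inv_closed[OF xc] c] xc c by (simp add: q_def)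
  then have "q = inv (x \<star> q \<otimes> x \<star> c)"
    using qc xc c by (simp add: P.inv_equality P_ac_simps)
  moreover have "inv (x \<star> q \<otimes> x \<star> c) \<in> zeta"
    using star_center2D(2)[OF x] qc c subgroup_star_center
    by (simp add: subgroup.m_closed subgroup.m_inv_closed)
  ultimately show ?thesis unfolding q_def by simp
qed

lemma subgroup_star_center2: "subgroup zeta2 P"
proof (rule P.subgroupI)
  show "zeta2 \<subseteq> carrier P" "zeta2 \<noteq> {}"
    using star_center2D star_center_subset_center2 one_mem_star_center by auto
next
  fix x assume x: "x \<in> zeta2"
  have xc: "x \<in> carrier P" using star_center2D x by auto
  have "c \<star> inv x \<in> zeta" if c: "c \<in> carrier P" for c
    using star_inv_right[OF c xc] star_center2D(3)[OF x c]
      subgroup.m_inv_closed[OF subgroup_star_center] by simp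
  then show "inv x \<in> zeta2"
    using star_inv_left_center2_mem[OF x] xc unfolding star_center2_def by auto
next
  fix x y assume x: "x \<in> zeta2" and y: "y \<in> zeta2"
  have xc: "x \<in> carrier P" and yc: "y \<in> carrier P" using star_center2D x y by auto
  have "(x \<otimes> y) \<star> c \<in> zeta" if c: "c \<in> carrier P" for c
    using star_add_left_center2[OF x y c] star_center2D(2)[OF x c] star_center2D(2)[OF y c]
      subgroup.m_closed[OF subgroup_star_center] by simp
  moreover have "c \<star> (x \<otimes> y) \<in> zeta" if c: "c \<in> carrier P" for c
    using star_add_right[OF c xc yc] star_center2D(3)[OF x c] star_center2D(3)[OF y c]
      subgroup.m_closed[OF subgroup_star_center] by simp
  ultimately show "x \<otimes> y \<in> zeta2"
    using xc yc unfolding star_center2_def by auto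
qed

lemma star_left_hom_center2: "c \<in> carrier P \<Longrightarrow> (\<lambda>y. y \<star> c) \<in> hom (P\<lparr>carrier := zeta2\<rparr>) P"
  by (rule homI) (simp_all add: star_add_left_center2 star_center2D)

lemma star_nat_pow_left: "\<lbrakk>y \<in> zeta2; c \<in> carrier P\<rbrakk> \<Longrightarrow>
    (y [^] (n::nat)) \<star> c = (y \<star> c) [^] n"
  using hom_nat_pow[OF star_left_hom_center2 _ subgroup.subgroup_is_group[OF subgroup_star_center2]]
  by (simp add: P.nat_pow_consistent[symmetric] P.is_group)

lemma star_int_pow_left: "\<lbrakk>y \<in> zeta2; c \<in> carrier P\<rbrakk> \<Longrightarrow>
    (y [^] (k::int)) \<star> c = (y \<star> c) [^] k"
  using hom_int_pow[OF star_left_hom_center2 _ subgroup.subgroup_is_group[OF subgroup_star_center2]]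
  by (simp add: P.int_pow_consistent[OF subgroup_star_center2, symmetric] P.is_group)

lemma ord_star_right_dvd: "\<lbrakk>x \<in> carrier P; y \<in> carrier P\<rbrakk> \<Longrightarrow> P.ord (x \<star> y) dvd P.ord y"
  using star_nat_pow_right[of x y "P.ord y"] by (simp add: P.pow_eq_id[symmetric])

lemma ord_star_left_dvd: "\<lbrakk>y \<in> zeta2; x \<in> carrier P\<rbrakk> \<Longrightarrow> P.ord (y \<star> x) dvd P.ord y"
  using star_nat_pow_left[of y x "P.ord y"] star_center2D(1)[of y]
  by (simp add: P.pow_eq_id[symmetric])

lemma subgroup_M_if_star_closed:
  assumes S_center2: "S \<subseteq> zeta2" and S: "subgroup S P"
    and S_star: "\<And>u v. \<lbrakk>u \<in> S; v \<in> S\<rbrakk> \<Longrightarrow> u \<star> v \<in> S"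
  shows "subgroup S M"
proof -
  have S_carrier: "u \<in> carrier P" if "u \<in> S" for u
    using subgroup.subset[OF S] that by blast
  have M_inv: "inv\<^bsub>M\<^esub> u = inv u \<otimes> u \<star> u" if u: "u \<in> S" for u
  proof -
    have uc: "u \<in> carrier P" using S_carrier u .
    have "u \<star> u \<in> zeta" using star_center2D(2) S_center2 u uc by auto
    then have "u \<star> (inv u \<otimes> u \<star> u) = inv (u \<star> u)"
      using star_add_right star_inv_right star_centerD(3) uc by simp
    then have "u \<otimes>\<^bsub>M\<^esub> (inv u \<otimes> u \<star> u) = \<one>\<^bsub>M\<^esub>"
      using uc by (simp add: M_mult_eq M_one_eq P_ac_simps)
    then have "inv\<^bsub>M\<^esub> (inv u \<otimes> u \<star> u) = u"
      using uc carrier_M by (intro M.inv_equality) simp_all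
    then show ?thesis
      using M.inv_inv[of "inv u \<otimes> u \<star> u"] uc carrier_M by simp
  qed
  show ?thesis
  proof (rule M.subgroupI)
    show "S \<subseteq> carrier M" "S \<noteq> {}"
      using S_carrier carrier_M subgroup.one_closed[OF S] by auto
    show "inv\<^bsub>M\<^esub> u \<in> S" if "u \<in> S" for u
      using M_inv S_star that S by (simp add: subgroup.m_closed subgroup.m_inv_closed)
    show "u \<otimes>\<^bsub>M\<^esub> v \<in> S" if "u \<in> S" "v \<in> S" for u v
      using M_mult_eq S_carrier S_star that S by (simp add: subgroup.m_closed)
  qed
qed

lemma star_generate_center_set_mult:
  assumes b: "b \<in> zeta2" and u: "u \<in> generate P {b} <#> zeta" and v: "v \<in> generate P {b} <#> zeta"
  shows "u \<star> v \<in> generate P {b \<star> b}"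
proof -
  have bc: "b \<in> carrier P" using star_center2D b by auto
  obtain k w l w' where u_eq: "u = b [^] (k::int) \<otimes> w" and w: "w \<in> zeta"
    and v_eq: "v = b [^] (l::int) \<otimes> w'" and w': "w' \<in> zeta"
    using u v by (auto simp: P.mem_generate_set_mult_iff[OF bc])
  have wc: "w \<in> carrier P" "w' \<in> carrier P" using star_centerD w w' by auto
  have "u \<star> v = b [^] k \<star> (b [^] l \<otimes> w')"
    unfolding u_eq v_eq using star_add_center_left[OF w] bc wc by simp
  also have "\<dots> = b [^] k \<star> b [^] l"
    using star_add_right star_centerD(3)[OF w'] bc wc by simp
  also have "\<dots> = (b \<star> b) [^] (k * l)"
    using b bc by (simp add: star_int_pow_left star_int_pow_right P.int_pow_pow)
  finally show ?thesis
    using bc by (auto simp: P.generate_pow[OF star_closed[OF bc bc]])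
qed

lemma generate_set_mult_subset_center2:
  assumes b: "b \<in> zeta2" and K: "K \<subseteq> zeta"
  shows "generate P {b} <#> K \<subseteq> zeta2"
proof -
  have "generate P {b} \<subseteq> zeta2"
    using P.generate_subgroup_incl subgroup_star_center2 b by auto
  then have "generate P {b} <#> K \<subseteq> zeta2 <#> zeta2"
    using mono_set_mult K star_center_subset_center2 by blast
  then show ?thesis
    using P.subgroup_mult_id[OF subgroup_star_center2] by simp
qed

lemma subbrace_generate_set_mult:
  assumes b: "b \<in> zeta2" and K: "subgroup K P" "K \<subseteq> zeta" "generate P {b \<star> b} \<subseteq> K"
  shows "subbrace P M (generate P {b} <#> K)"
proof -
  have bc: "b \<in> carrier P" using star_center2D b by auto
  have gen_b: "subgroup (generate P {b}) P"
    using P.generate_is_subgroup bc by simp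
  have "K \<subseteq> generate P {b} <#> K"
    using P.set_mult_supset_right subgroup.one_closed[OF gen_b] subgroup.subset[OF K(1)] .
  moreover have "generate P {b} <#> K \<subseteq> generate P {b} <#> zeta"
    using mono_set_mult K(2) by blast
  ultimately have "u \<star> v \<in> generate P {b} <#> K"
    if "u \<in> generate P {b} <#> K" "v \<in> generate P {b} <#> K" for u v
    using star_generate_center_set_mult[OF b] K(3) that by blast
  moreover have sub_P: "subgroup (generate P {b} <#> K) P"
    using P.mult_subgroups[OF gen_b K(1)] .
  ultimately show ?thesis
    unfolding subbrace_def
    using subgroup_M_if_star_closed[OF generate_set_mult_subset_center2[OF b K(2)] sub_P] by blast
qed

lemma generate_star_subset_center: "b \<in> zeta2 \<Longrightarrow> generate P {b \<star> b} \<subseteq> zeta"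
  using P.generate_subgroup_incl subgroup_star_center star_center2D by simp

lemma brace_ideal_generate_center_set_mult:
  assumes b: "b \<in> zeta2"
  shows "brace_ideal P M (generate P {b} <#> zeta)"
proof -
  have bc: "b \<in> carrier P" using star_center2D b by auto
  have zeta_J: "zeta \<subseteq> generate P {b} <#> zeta"
    using P.set_mult_supset_right subgroup.one_closed[OF P.generate_is_subgroup] bc
      subgroup.subset[OF subgroup_star_center] by simp
  have J_center2: "generate P {b} <#> zeta \<subseteq> zeta2"
    using generate_set_mult_subset_center2[OF b] by simp
  have "a \<star> z \<in> generate P {b} <#> zeta \<and> z \<star> a \<in> generate P {b} <#> zeta"
    if "a \<in> carrier P" "z \<in> generate P {b} <#> zeta" for a z
    using zeta_J star_center2D(2,3)[OF subsetD[OF J_center2 that(2)] that(1)] by blast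
  moreover have "subbrace P M (carrier P)"
    unfolding subbrace_def using P.subgroup_self M.subgroup_self carrier_M by simp
  moreover have "subbrace P M (generate P {b} <#> zeta)"
    using subbrace_generate_set_mult[OF b subgroup_star_center] generate_star_subset_center[OF b] by simp
  ultimately show ?thesis
    unfolding brace_ideal_def ideal_of_def subbrace_def using subgroup.subset by blast
qed

lemma ideal_of_generate_set_mult:
  assumes b: "b \<in> zeta2"
  shows "ideal_of P M (generate P {b} <#> generate P {b \<star> b}) (generate P {b} <#> zeta)"
proof -
  have bc: "b \<in> carrier P" using star_center2D b by auto
  have sub_bb: "subgroup (generate P {b \<star> b}) P"
    using P.generate_is_subgroup bc by simp
  have I_J: "generate P {b} <#> generate P {b \<star> b} \<subseteq> generate P {b} <#> zeta"
    using mono_set_mult generate_star_subset_center[OF b] by blast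
  have "generate P {b \<star> b} \<subseteq> generate P {b} <#> generate P {b \<star> b}"
    using P.set_mult_supset_right subgroup.one_closed[OF P.generate_is_subgroup] bc
      subgroup.subset[OF sub_bb] by simp
  then have "a \<star> z \<in> generate P {b} <#> generate P {b \<star> b} \<and> z \<star> a \<in> generate P {b} <#> generate P {b \<star> b}"
    if "a \<in> generate P {b} <#> zeta" "z \<in> generate P {b} <#> generate P {b \<star> b}" for a z
    using star_generate_center_set_mult[OF b] I_J that by blast
  then show ?thesis
    unfolding ideal_of_def
    using subbrace_generate_set_mult[OF b subgroup_star_center] subbrace_generate_set_mult[OF b sub_bb]
      generate_star_subset_center[OF b] I_J by simp
qed

lemma T_brace_star_center2_mem:
  assumes T: "T_brace P M" and b: "b \<in> zeta2" and x: "x \<in> carrier P"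
  shows "x \<star> b \<in> generate P {b} <#> generate P {b \<star> b}"
    and "b \<star> x \<in> generate P {b} <#> generate P {b \<star> b}"
proof -
  have bc: "b \<in> carrier P" using star_center2D b by auto
  have "brace_ideal P M (generate P {b} <#> generate P {b \<star> b})"
    using T ideal_of_generate_set_mult[OF b] brace_ideal_generate_center_set_mult[OF b]
    unfolding T_brace_def by blast
  moreover have "b \<in> generate P {b} <#> generate P {b \<star> b}"
    using P.set_mult_supset_left[OF generate.one P.generate_incl] generate.incl[of b "{b}" P] bc
    by blast
  ultimately show "x \<star> b \<in> generate P {b} <#> generate P {b \<star> b}"
    and "b \<star> x \<in> generate P {b} <#> generate P {b \<star> b}"
    using x unfolding brace_ideal_def ideal_of_def by auto
qed

lemma exists_non_torsion_star_annihilator: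
  assumes F: "finite F" "F \<subseteq> carrier P" and z: "z \<in> zeta2" "P.ord z = 0"
  obtains c where "c \<in> zeta2" "P.ord c = 0" "\<forall>y\<in>insert c F. c \<star> y = \<one> \<and> y \<star> c = \<one>"
proof (cases "\<exists>w\<in>zeta. P.ord w = 0")
  case True
  then obtain w where w: "w \<in> zeta" "P.ord w = 0" by blast
  show ?thesis
  proof (rule that)
    show "w \<in> zeta2" using w(1) star_center_subset_center2 by blast
    show "P.ord w = 0" by (rule w(2))
    show "\<forall>y\<in>insert w F. w \<star> y = \<one> \<and> y \<star> w = \<one>"
      using star_centerD[OF w(1)] F(2) by auto
  qed
next
  case False
  have zc: "z \<in> carrier P" using star_center2D z by auto
  define N where "N = (\<Prod>y\<in>insert z F. P.ord (z \<star> y) * P.ord (y \<star> z))"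
  have ord_dvd: "P.ord (z \<star> y) dvd N \<and> P.ord (y \<star> z) dvd N" if "y \<in> insert z F" for y
  proof -
    have "P.ord (z \<star> y) * P.ord (y \<star> z) dvd N"
      unfolding N_def using F(1) that by (intro dvd_prodI) simp_all
    then show ?thesis
      using dvd_mult_left dvd_mult_right by blast
  qed
  have "P.ord (z \<star> y) \<noteq> 0 \<and> P.ord (y \<star> z) \<noteq> 0" if "y \<in> insert z F" for y
  proof -
    have "y \<in> carrier P" using that zc F(2) by auto
    then show ?thesis
      using False star_center2D(2,3)[OF z(1)] by auto
  qed
  then have N: "N \<noteq> 0"
    unfolding N_def using F(1) by (simp add: prod_zero_iff)
  define c where "c = z [^] N"
  have c: "c \<in> zeta2"
    using P.subgroup_int_pow_closed[OF subgroup_star_center2 z(1), of "int N"] by (simp add: c_def int_pow_int)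
  have cc: "c \<in> carrier P" using star_center2D c by auto
  have ann: "c \<star> y = \<one> \<and> y \<star> c = \<one>" if y: "y \<in> insert z F" for y
  proof -
    have yc: "y \<in> carrier P" using y zc F(2) by auto
    show ?thesis
      unfolding c_def using ord_dvd[OF y] star_nat_pow_left[OF z(1) yc] star_nat_pow_right[OF yc zc] zc yc
      by (simp add: P.pow_eq_id)
  qed
  show ?thesis
  proof (rule that)
    show "c \<in> zeta2" by (rule c)
    show "P.ord c = 0" unfolding c_def by (rule P.ord_pow_eq_0[OF zc z(2) N])
    have "c \<star> c = \<one>"
      using star_nat_pow_left[OF z(1) cc, of N] ann[of z] unfolding c_def by simp
    then show "\<forall>y\<in>insert c F. c \<star> y = \<one> \<and> y \<star> c = \<one>"
      using ann by auto
  qed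
qed

lemma T_brace_star_mem_generate_star_self:
  assumes T: "T_brace P M" and a: "a \<in> zeta2" "P.ord a \<noteq> 0"
    and z: "z \<in> zeta2" "P.ord z = 0" and x: "x \<in> carrier P"
  shows "x \<star> a \<in> generate P {a \<star> a} \<and> a \<star> x \<in> generate P {a \<star> a}"
proof -
  have ac: "a \<in> carrier P" using star_center2D a by auto
  obtain c where c: "c \<in> zeta2" "P.ord c = 0"
    and ann: "\<forall>y\<in>{c, x, a}. c \<star> y = \<one> \<and> y \<star> c = \<one>"
    by (rule exists_non_torsion_star_annihilator[of "{x, a}" z]) (use x ac z in auto)
  have cc: "c \<in> carrier P" using star_center2D c by auto
  have "x \<star> (a \<otimes> c) = x \<star> a" "(a \<otimes> c) \<star> x = a \<star> x" "(a \<otimes> c) \<star> (a \<otimes> c) = a \<star> a"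
    using ann x ac cc by (simp_all add: star_add_right star_add_left_center2[OF a(1) c(1)])
  then have mem: "x \<star> a \<in> generate P {a \<otimes> c} <#> generate P {a \<star> a}"
    "a \<star> x \<in> generate P {a \<otimes> c} <#> generate P {a \<star> a}"
    using T_brace_star_center2_mem[OF T subgroup.m_closed[OF subgroup_star_center2 a(1) c(1)] x]
    by simp_all
  have ord: "P.ord (x \<star> a) \<noteq> 0" "P.ord (a \<star> x) \<noteq> 0" "P.ord (a \<star> a) \<noteq> 0"
    using ord_star_right_dvd[OF x ac] ord_star_left_dvd[OF a(1) x] ord_star_right_dvd[OF ac ac] a(2)
    by auto
  show ?thesis
    using P.torsion_mem_generate_set_mult[OF ac cc star_closed[OF ac ac] a(2) ord(3) c(2)]
      ord(1,2) mem by simp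
qed

end

theorem lemma4p4:
  fixes P M :: "'a monoid"
  assumes "T_brace P M"
    and "a \<in> star_center2 P M"
    and "\<exists>n::nat. n > 0 \<and> a [^]\<^bsub>P\<^esub> n = \<one>\<^bsub>P\<^esub>"
    and "\<exists>z\<in>star_center2 P M. \<forall>n::nat. n > 0 \<longrightarrow> z [^]\<^bsub>P\<^esub> n \<noteq> \<one>\<^bsub>P\<^esub>"
  shows "\<forall>x\<in>carrier P.
           bstar P M x a \<in> generate P {bstar P M a a} \<and>
           bstar P M a x \<in> generate P {bstar P M a a}"
proof
  fix x assume x: "x \<in> carrier P"
  interpret left_brace P M
    using assms(1) by (simp add: T_brace_def left_braceI)
  have "P.ord a \<noteq> 0"
    using assms(3) star_center2D(1)[OF assms(2)] by (auto simp: P.pow_eq_id)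
  moreover obtain z where "z \<in> star_center2 P M" "P.ord z = 0"
    using assms(4) star_center2D(1) by (auto simp: P.ord_eq_0)
  ultimately show "bstar P M x a \<in> generate P {bstar P M a a} \<and> bstar P M a x \<in> generate P {bstar P M a a}"
    by (rule T_brace_star_mem_generate_star_self[OF assms(1,2) _ _ _ x])
qed

end
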